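(* Let $S=(G,-1,q)$ and $S'=(G',-1',q')$ be quaternionic structures. Then (a) $B(S\times S')\cong B(S)\times B(S')$, and (b) $B(S\Delta)\cong B(S)\times G$ as groups.
   Context: A quaternionic structure is a triple $S=(G,-1,q)$ where $G$ is a multiplicative group in which every element is its own inverse, $-1\in G$ is a distinguished element (possibly $-1=1$), $-a:=(-1)a$, and $q:G\times G\to Q$ is a surjective map onto a set $Q$ with distinguished element $0$, such that for all $a,b,c,d\in G$: (Q1) $q(a,-a)=0$; (Q2) $q(a,b)=q(b,a)$; (Q3) $q(a,b)=q(a,c)\iff q(a,bc)=0$; (Q4) $q(a,b)=q(c,d)\iff$ there is $x\in G$ with $q(a,b)=q(a,x)=q(c,x)=q(c,d)$. The abstract 2-Brauer group $B(S)$ is the abelian group, with operation $\ast$, generated by $Q$ subject only to the relations $q(a,b)\ast q(a,c)=q(a,bc)$ for all $a,b,c\in G$. Direct product: for $S_i=(G_i,e_i,q_i)$, $S_1\times S_2=(G_1\times G_2,(e_1,e_2),q_1\times q_2)$ with $(q_1\times q_2)((a_1,a_2),(b_1,b_2))=(q_1(a_1,b_1),q_2(a_2,b_2))$, quaternion set $Q_1\times Q_2$ and zero $(0,0)$. Group extension: $S\Delta=S[x]=(G\times\{1,x\},-1,q_x)$ where $\{1,x\}$ is cyclic of order $2$ (inner direct product notation) and $q_x(ax^\alpha,bx^\beta)=(q(a,b),(-1)^{\alpha\beta}a^\beta b^\alpha)\in Q\times G$ for $a,b\in G$, $\alpha,\beta\in\{0,1\}$, with zero quaternion $(0,1)$ and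 quaternion set the image of $q_x$. Both constructions yield quaternionic structures. *)

theory Defs
  imports "HOL-Algebra.Algebra" "HOL-Algebra.Free_Abelian_Groups"
begin

text \<open>A quaternionic structure (G, -1, q) with zero quaternion z.  The group G is a
  HOL-Algebra group; the quaternion set Q is the image of q on carrier G x carrier G
  (so q is surjective onto Q by construction).\<close>

definition qset :: "('a, 'm) monoid_scheme \<Rightarrow> ('a \<Rightarrow> 'a \<Rightarrow> 'q) \<Rightarrow> 'q set" where
  "qset G q = (\<lambda>(a, b). q a b) ` (carrier G \<times> carrier G)"

definition quaternionic_structure ::
  "('a, 'm) monoid_scheme \<Rightarrow> 'a \<Rightarrow> ('a \<Rightarrow> 'a \<Rightarrow> 'q) \<Rightarrow> 'q \<Rightarrow> bool" where
  "quaternionic_structure G m q z \<longleftrightarrow>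
     group G \<and> (\<forall>a\<in>carrier G. a \<otimes>\<^bsub>G\<^esub> a = \<one>\<^bsub>G\<^esub>) \<and> m \<in> carrier G \<and> z \<in> qset G q \<and>
     (\<forall>a\<in>carrier G. q a (m \<otimes>\<^bsub>G\<^esub> a) = z) \<and>
     (\<forall>a\<in>carrier G. \<forall>b\<in>carrier G. q a b = q b a) \<and>
     (\<forall>a\<in>carrier G. \<forall>b\<in>carrier G. \<forall>c\<in>carrier G.
        q a b = q a c \<longleftrightarrow> q a (b \<otimes>\<^bsub>G\<^esub> c) = z) \<and>
     (\<forall>a\<in>carrier G. \<forall>b\<in>carrier G. \<forall>c\<in>carrier G. \<forall>d\<in>carrier G.
        q a b = q c d \<longleftrightarrow>
        (\<exists>x\<in>carrier G. q a b = q a x \<and> q a x = q c x \<and> q c x = q c d))"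

definition brauer_rels :: "('a, 'm) monoid_scheme \<Rightarrow> ('a \<Rightarrow> 'a \<Rightarrow> 'q) \<Rightarrow> ('q \<Rightarrow>\<^sub>0 int) set" where
  "brauer_rels G q = {Poly_Mapping.single (q a b) 1 + Poly_Mapping.single (q a c) 1
                        - Poly_Mapping.single (q a (b \<otimes>\<^bsub>G\<^esub> c)) 1
                      | a b c. a \<in> carrier G \<and> b \<in> carrier G \<and> c \<in> carrier G}"

definition brauer :: "('a, 'm) monoid_scheme \<Rightarrow> ('a \<Rightarrow> 'a \<Rightarrow> 'q) \<Rightarrow> ('q \<Rightarrow>\<^sub>0 int) set monoid" where
  "brauer G q = free_Abelian_group (qset G q) Mod
                  generate (free_Abelian_group (qset G q)) (brauer_rels G q)"

definition qprod_map :: "('a \<Rightarrow> 'a \<Rightarrow> 'q) \<Rightarrow> ('b \<Rightarrow> 'b \<Rightarrow> 'r) \<Rightarrow>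
    ('a \<times> 'b) \<Rightarrow> ('a \<times> 'b) \<Rightarrow> 'q \<times> 'r" where
  "qprod_map q q' = (\<lambda>(a1, a2) (b1, b2). (q a1 b1, q' a2 b2))"

text \<open>The cyclic group of order 2 {1, x}, with True representing x.\<close>

definition C2 :: "bool monoid" where
  "C2 = \<lparr>carrier = UNIV, monoid.mult = (\<noteq>), one = False\<rparr>"

definition qext_map :: "('a, 'm) monoid_scheme \<Rightarrow> 'a \<Rightarrow> ('a \<Rightarrow> 'a \<Rightarrow> 'q) \<Rightarrow>
    ('a \<times> bool) \<Rightarrow> ('a \<times> bool) \<Rightarrow> 'q \<times> 'a" where
  "qext_map G m q = (\<lambda>(a, al) (b, be).
      (q a b, (if al \<and> be then m else \<one>\<^bsub>G\<^esub>) \<otimes>\<^bsub>G\<^esub>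
              ((if be then a else \<one>\<^bsub>G\<^esub>) \<otimes>\<^bsub>G\<^esub> (if al then b else \<one>\<^bsub>G\<^esub>))))"

end

theory Submission
  imports Defs
begin

(*
  B(S) is presented by the generators Q and the relations q(a,b) q(a,c) = q(a,bc), so a map on Q
  respecting these relations induces a homomorphism out of B(S), and two homomorphisms out of B(S)
  agree once they agree on the classes [x] of the generators.

  In both parts B splits along two retractions (0 denotes the zero quaternion). For S x S' the
  projections induce B(S x S') -> B(S), B(S'), the embeddings a |-> (a,1) and a |-> (1,a) induce
  sections, and [(q(a,b), q'(a',b'))] = [(q(a,b), 0)] [(0, q'(a',b'))] is the defining relation at
  (a,a') with second arguments (b,1) and (1,b'). For S[x] the assignment [(y,g)] |-> ([y], g) is
  well defined because the second coordinate of q_x is multiplicative in its second argument (this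
  uses g g = 1), g |-> [(0,g)] is a homomorphism G -> B(S[x]), and by symmetry and bilinearity of
  q_x every generator [q_x(a x^al, b x^be)] factors as [(q(a,b), 1)] [(0, g)].
*)

lemma free_Abelian_group_hom_eq:
  assumes "group K" "f \<in> hom (free_Abelian_group S) K" "g \<in> hom (free_Abelian_group S) K"
    and "\<And>x. x \<in> S \<Longrightarrow> f (frag_of x) = g (frag_of x)"
    and "u \<in> carrier (free_Abelian_group S)"
  shows "f u = g u"
proof -
  have hom_zero: "h 0 = \<one>\<^bsub>K\<^esub>" if "h \<in> hom (free_Abelian_group S) K" for h
    using that assms(1) group_hom.hom_one[of "free_Abelian_group S" K h]
    by (simp add: group_hom_def group_hom_axioms_def)
  have hom_diff: "h (x - y) = h x \<otimes>\<^bsub>K\<^esub> inv\<^bsub>K\<^esub> h y"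
    if "h \<in> hom (free_Abelian_group S) K"
      and "Poly_Mapping.keys x \<subseteq> S" "Poly_Mapping.keys y \<subseteq> S" for h x y
  proof -
    interpret h: group_hom "free_Abelian_group S" K h
      using that assms(1) by (simp add: group_hom_def group_hom_axioms_def)
    have x: "x \<in> carrier (free_Abelian_group S)" and y: "y \<in> carrier (free_Abelian_group S)"
      using that by simp_all
    have "h (x - y) = h (x \<otimes>\<^bsub>free_Abelian_group S\<^esub> inv\<^bsub>free_Abelian_group S\<^esub> y)"
      using that by simp
    also have "\<dots> = h x \<otimes>\<^bsub>K\<^esub> inv\<^bsub>K\<^esub> h y"
      using h.hom_mult[OF x h.G.inv_closed[OF y]] h.hom_inv[OF y] by simp
    finally show ?thesis .
  qed
  show ?thesis
  proof (rule free_Abelian_group_induct[of u S])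
    show "Poly_Mapping.keys u \<subseteq> S"
      using assms(5) by simp
    show "f 0 = g 0"
      using hom_zero[OF assms(2)] hom_zero[OF assms(3)] by simp
  next
    fix x y
    assume "Poly_Mapping.keys x \<subseteq> S" "Poly_Mapping.keys y \<subseteq> S" "f x = g x" "f y = g y"
    then show "f (x - y) = g (x - y)"
      by (simp only: hom_diff[OF assms(2)] hom_diff[OF assms(3)])
  qed (rule assms(4))
qed

lemma inverse_homs_imp_is_iso:
  assumes "f \<in> hom G H" "g \<in> hom H G"
    and "\<And>x. x \<in> carrier G \<Longrightarrow> g (f x) = x" "\<And>y. y \<in> carrier H \<Longrightarrow> f (g y) = y"
  shows "G \<cong> H"
proof (rule is_isoI[OF isoI[OF assms(1)]])
  show "bij_betw f (carrier G) (carrier H)"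
    by (rule bij_betw_byWitness[where f' = g]) (use assms in \<open>auto simp: hom_def\<close>)
qed

lemma hom_DirProd_mult:
  assumes "comm_group K" "f \<in> hom G K" "g \<in> hom H K"
  shows "(\<lambda>(x, y). f x \<otimes>\<^bsub>K\<^esub> g y) \<in> hom (G \<times>\<times> H) K"
proof -
  interpret comm_group K by fact
  show ?thesis
    using assms(2,3) by (auto intro!: homI simp: hom_mult hom_in_carrier m_ac)
qed

lemma (in group) comm_group_if_squares_one:
  assumes "\<And>x. x \<in> carrier G \<Longrightarrow> x \<otimes> x = \<one>"
  shows "comm_group G"
proof (rule group_comm_groupI)
  have inv_self: "inv x = x" if "x \<in> carrier G" for x
    using assms that by (simp add: inv_equality)
  fix x y assume "x \<in> carrier G" "y \<in> carrier G"
  then show "x \<otimes> y = y \<otimes> x"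
    by (metis inv_self inv_mult_group m_closed)
qed

section \<open>The abstract 2-Brauer group\<close>

lemma q_in_qset: "a \<in> carrier G \<Longrightarrow> b \<in> carrier G \<Longrightarrow> q a b \<in> qset G q"
  by (auto simp: qset_def)

abbreviation brauer_rels_subgroup ::
    "('a, 'm) monoid_scheme \<Rightarrow> ('a \<Rightarrow> 'a \<Rightarrow> 'q) \<Rightarrow> ('q \<Rightarrow>\<^sub>0 int) set" where
  "brauer_rels_subgroup G q \<equiv> generate (free_Abelian_group (qset G q)) (brauer_rels G q)"

definition brauer_proj ::
    "('a, 'm) monoid_scheme \<Rightarrow> ('a \<Rightarrow> 'a \<Rightarrow> 'q) \<Rightarrow> ('q \<Rightarrow>\<^sub>0 int) \<Rightarrow> ('q \<Rightarrow>\<^sub>0 int) set" where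
  "brauer_proj G q u = brauer_rels_subgroup G q #>\<^bsub>free_Abelian_group (qset G q)\<^esub> u"

abbreviation brauer_class :: "('a, 'm) monoid_scheme \<Rightarrow> ('a \<Rightarrow> 'a \<Rightarrow> 'q) \<Rightarrow> 'q \<Rightarrow> ('q \<Rightarrow>\<^sub>0 int) set" where
  "brauer_class G q x \<equiv> brauer_proj G q (frag_of x)"

lemma brauer_rels_subset:
  assumes "monoid G"
  shows "brauer_rels G q \<subseteq> carrier (free_Abelian_group (qset G q))"
  using assms by (fastforce simp: brauer_rels_def q_in_qset monoid.m_closed
      dest: subsetD[OF keys_diff] subsetD[OF keys_add])

lemma subgroup_brauer_rels_subgroup:
  assumes "monoid G"
  shows "subgroup (brauer_rels_subgroup G q) (free_Abelian_group (qset G q))"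
  using assms by (simp add: group.generate_is_subgroup brauer_rels_subset)

lemma comm_group_brauer: "monoid G \<Longrightarrow> comm_group (brauer G q)"
  unfolding brauer_def
  by (simp add: subgroup_brauer_rels_subgroup abelian_free_Abelian_group
      comm_group.abelian_FactGroup)

lemma group_brauer: "monoid G \<Longrightarrow> group (brauer G q)"
  using comm_group_brauer comm_group_def by blast

lemma brauer_proj_hom:
  assumes "monoid G"
  shows "brauer_proj G q \<in> hom (free_Abelian_group (qset G q)) (brauer G q)"
proof -
  have "brauer_rels_subgroup G q \<lhd> free_Abelian_group (qset G q)"
    using assms by (simp add: subgroup_brauer_rels_subgroup abelian_free_Abelian_group
        comm_group.normal_iff_subgroup)
  then show ?thesis
    unfolding brauer_def brauer_proj_def by (rule normal.r_coset_hom_Mod)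
qed

lemma carrier_brauer:
  "carrier (brauer G q) = brauer_proj G q ` carrier (free_Abelian_group (qset G q))"
  unfolding brauer_def brauer_proj_def by (simp add: carrier_FactGroup)

lemma brauer_class_closed:
  "monoid G \<Longrightarrow> x \<in> qset G q \<Longrightarrow> brauer_class G q x \<in> carrier (brauer G q)"
  by (rule hom_in_carrier[OF brauer_proj_hom]) simp_all

lemma brauer_class_mult:
  assumes "monoid G" "a \<in> carrier G" "b \<in> carrier G" "c \<in> carrier G"
  shows "brauer_class G q (q a b) \<otimes>\<^bsub>brauer G q\<^esub> brauer_class G q (q a c)
       = brauer_class G q (q a (b \<otimes>\<^bsub>G\<^esub> c))"
proof -
  let ?F = "free_Abelian_group (qset G q)" and ?N = "brauer_rels_subgroup G q"
  let ?x = "frag_of (q a b)" and ?y = "frag_of (q a c)" and ?w = "frag_of (q a (b \<otimes>\<^bsub>G\<^esub> c))"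
  interpret proj: group_hom ?F "brauer G q" "brauer_proj G q"
    using assms(1) by (simp add: group_hom_def group_hom_axioms_def group_brauer brauer_proj_hom)
  have gens: "?x \<in> carrier ?F" "?y \<in> carrier ?F" "?w \<in> carrier ?F"
    using assms by (simp_all add: q_in_qset monoid.m_closed)
  have rel: "?x + ?y - ?w \<in> ?N"
    by (rule generate.incl) (use assms in \<open>auto simp: brauer_rels_def\<close>)
  then have rel_carrier: "?x + ?y - ?w \<in> carrier ?F"
    using assms(1) brauer_rels_subset group.generate_incl group_free_Abelian_group by blast
  have rel_one: "brauer_proj G q (?x + ?y - ?w) = \<one>\<^bsub>brauer G q\<^esub>"
    unfolding brauer_def brauer_proj_def
    using group.coset_join2[OF group_free_Abelian_group rel_carrier
        subgroup_brauer_rels_subgroup[OF assms(1)] rel]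
    by simp
  have "brauer_proj G q (?x + ?y) = brauer_proj G q ((?x + ?y - ?w) \<otimes>\<^bsub>?F\<^esub> ?w)"
    by simp
  also have "\<dots> = brauer_proj G q ?w"
    using proj.hom_mult[OF rel_carrier gens(3)] gens(3) by (simp add: rel_one)
  finally have "brauer_proj G q (?x + ?y) = brauer_proj G q ?w" .
  then show ?thesis
    using gens proj.hom_mult by simp
qed

lemma brauer_class_q_one:
  assumes "monoid G" "a \<in> carrier G"
  shows "brauer_class G q (q a \<one>\<^bsub>G\<^esub>) = \<one>\<^bsub>brauer G q\<^esub>"
proof -
  have "brauer_class G q (q a \<one>\<^bsub>G\<^esub>) \<otimes>\<^bsub>brauer G q\<^esub> brauer_class G q (q a \<one>\<^bsub>G\<^esub>)
      = brauer_class G q (q a \<one>\<^bsub>G\<^esub>)"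
    using brauer_class_mult[OF assms monoid.one_closed monoid.one_closed] assms(1) by simp
  then show ?thesis
    using assms by (simp add: group.l_cancel_one group_brauer brauer_class_closed q_in_qset)
qed

lemma brauer_class_mult_left:
  assumes "monoid G" "\<And>a b. a \<in> carrier G \<Longrightarrow> b \<in> carrier G \<Longrightarrow> q a b = q b a"
    and "a \<in> carrier G" "b \<in> carrier G" "c \<in> carrier G"
  shows "brauer_class G q (q (a \<otimes>\<^bsub>G\<^esub> b) c)
       = brauer_class G q (q a c) \<otimes>\<^bsub>brauer G q\<^esub> brauer_class G q (q b c)"
proof -
  have "q (a \<otimes>\<^bsub>G\<^esub> b) c = q c (a \<otimes>\<^bsub>G\<^esub> b)" "q a c = q c a" "q b c = q c b"
    using assms by (simp_all add: monoid.m_closed)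
  then show ?thesis
    using brauer_class_mult[OF assms(1,5,3,4), of q] by simp
qed

lemma brauer_universal:
  assumes "monoid G" "comm_group K" "f ` qset G q \<subseteq> carrier K"
    and rel: "\<And>a b c. a \<in> carrier G \<Longrightarrow> b \<in> carrier G \<Longrightarrow> c \<in> carrier G \<Longrightarrow>
       f (q a b) \<otimes>\<^bsub>K\<^esub> f (q a c) = f (q a (b \<otimes>\<^bsub>G\<^esub> c))"
  obtains h where "h \<in> hom (brauer G q) K" "\<And>x. x \<in> qset G q \<Longrightarrow> h (brauer_class G q x) = f x"
proof -
  let ?F = "free_Abelian_group (qset G q)" and ?N = "brauer_rels_subgroup G q"
  obtain h0 where h0: "h0 \<in> hom ?F K" "\<And>x. x \<in> qset G q \<Longrightarrow> h0 (frag_of x) = f x"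
    using comm_group.free_Abelian_group_universal[OF assms(2,3)] by blast
  interpret h0: group_hom ?F K h0
    using h0(1) assms(2) by (simp add: group_hom_def group_hom_axioms_def comm_group_def)
  have "brauer_rels G q \<subseteq> kernel ?F K h0"
  proof
    fix r assume "r \<in> brauer_rels G q"
    then obtain a b c where abc: "a \<in> carrier G" "b \<in> carrier G" "c \<in> carrier G"
      and r: "r = frag_of (q a b) + frag_of (q a c) - frag_of (q a (b \<otimes>\<^bsub>G\<^esub> c))"
      by (auto simp: brauer_rels_def)
    let ?x = "frag_of (q a b)" and ?y = "frag_of (q a c)" and ?w = "frag_of (q a (b \<otimes>\<^bsub>G\<^esub> c))"
    have gens: "?x \<in> carrier ?F" "?y \<in> carrier ?F" "?w \<in> carrier ?F"
      using abc assms(1) by (simp_all add: q_in_qset monoid.m_closed)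
    have "h0 r = h0 ((?x \<otimes>\<^bsub>?F\<^esub> ?y) \<otimes>\<^bsub>?F\<^esub> inv\<^bsub>?F\<^esub> ?w)"
      using gens by (simp add: r)
    also have "\<dots> = (h0 ?x \<otimes>\<^bsub>K\<^esub> h0 ?y) \<otimes>\<^bsub>K\<^esub> inv\<^bsub>K\<^esub> h0 ?w"
      by (simp only: h0.hom_mult[OF h0.G.m_closed[OF gens(1,2)] h0.G.inv_closed[OF gens(3)]]
          h0.hom_mult[OF gens(1,2)] h0.hom_inv[OF gens(3)])
    also have "\<dots> = (f (q a b) \<otimes>\<^bsub>K\<^esub> f (q a c)) \<otimes>\<^bsub>K\<^esub> inv\<^bsub>K\<^esub> f (q a (b \<otimes>\<^bsub>G\<^esub> c))"
      using gens by (simp add: h0(2))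
    also have "\<dots> = \<one>\<^bsub>K\<^esub>"
      using rel[OF abc] gens assms(3) by auto
    finally show "r \<in> kernel ?F K h0"
      unfolding kernel_def using \<open>r \<in> brauer_rels G q\<close> brauer_rels_subset[OF assms(1), of q]
      by blast
  qed
  then have "?N \<subseteq> kernel ?F K h0"
    by (simp add: h0.G.generate_subgroup_incl h0.subgroup_kernel)
  then obtain h where "h \<in> hom (?F Mod ?N) K"
      "\<And>u. u \<in> carrier ?F \<Longrightarrow> h (?N #>\<^bsub>?F\<^esub> u) = h0 u"
    using h0.FactGroup_universal_kernel assms(1) subgroup_brauer_rels_subgroup
      abelian_free_Abelian_group comm_group.normal_iff_subgroup by metis
  then show thesis
    using that h0(2) unfolding brauer_def brauer_proj_def by simp
qed

lemma brauer_hom_eq: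
  assumes "monoid G" "group K" "f \<in> hom (brauer G q) K" "g \<in> hom (brauer G q) K"
    and "\<And>x. x \<in> qset G q \<Longrightarrow> f (brauer_class G q x) = g (brauer_class G q x)"
    and "u \<in> carrier (brauer G q)"
  shows "f u = g u"
proof -
  obtain v where v: "v \<in> carrier (free_Abelian_group (qset G q))" "u = brauer_proj G q v"
    using assms(6) by (auto simp: carrier_brauer)
  have "(f \<circ> brauer_proj G q) v = (g \<circ> brauer_proj G q) v"
    by (rule free_Abelian_group_hom_eq[OF assms(2) hom_compose hom_compose _ v(1)])
      (use assms brauer_proj_hom in simp_all)
  then show ?thesis
    by (simp add: v(2))
qed

lemma brauer_hom_comp_eq_id:
  assumes "monoid G" "f \<in> hom (brauer G q) H" "g \<in> hom H (brauer G q)"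
    and "\<And>x. x \<in> qset G q \<Longrightarrow> g (f (brauer_class G q x)) = brauer_class G q x"
    and "u \<in> carrier (brauer G q)"
  shows "g (f u) = u"
  by (rule brauer_hom_eq[OF assms(1) group_brauer[OF assms(1)] hom_compose[OF assms(2,3)],
        unfolded comp_def, of "\<lambda>u. u"])
    (use assms(4,5) in \<open>auto simp: hom_def\<close>)

lemma brauer_hom_comp_eq_one:
  assumes "monoid G" "group K" "f \<in> hom (brauer G q) H" "g \<in> hom H K"
    and "\<And>x. x \<in> qset G q \<Longrightarrow> g (f (brauer_class G q x)) = \<one>\<^bsub>K\<^esub>"
    and "u \<in> carrier (brauer G q)"
  shows "g (f u) = \<one>\<^bsub>K\<^esub>"
  by (rule brauer_hom_eq[OF assms(1,2) hom_compose[OF assms(3,4)] trivial_hom[OF assms(2)],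
        unfolded comp_def])
    (use assms(5,6) in auto)

lemma brauer_map:
  assumes "monoid G" "monoid G'" "\<phi> \<in> hom G G'"
    and "\<And>a b. a \<in> carrier G \<Longrightarrow> b \<in> carrier G \<Longrightarrow> q' (\<phi> a) (\<phi> b) = \<psi> (q a b)"
  obtains h where "h \<in> hom (brauer G q) (brauer G' q')"
    "\<And>x. x \<in> qset G q \<Longrightarrow> h (brauer_class G q x) = brauer_class G' q' (\<psi> x)"
proof (rule brauer_universal[OF assms(1) comm_group_brauer[OF assms(2)]])
  have "brauer_class G' q' (q' (\<phi> a) (\<phi> b)) \<in> carrier (brauer G' q')"
    if "a \<in> carrier G" "b \<in> carrier G" for a b
    using that by (intro brauer_class_closed[OF assms(2)] q_in_qset hom_in_carrier[OF assms(3)])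
  then show "(\<lambda>x. brauer_class G' q' (\<psi> x)) ` qset G q \<subseteq> carrier (brauer G' q')"
    by (auto simp: qset_def simp flip: assms(4))
next
  fix a b c assume "a \<in> carrier G" "b \<in> carrier G" "c \<in> carrier G"
  then show "brauer_class G' q' (\<psi> (q a b)) \<otimes>\<^bsub>brauer G' q'\<^esub> brauer_class G' q' (\<psi> (q a c))
      = brauer_class G' q' (\<psi> (q a (b \<otimes>\<^bsub>G\<^esub> c)))"
    using assms brauer_class_mult[OF assms(2), of "\<phi> a" "\<phi> b" "\<phi> c" q']
    by (simp add: hom_in_carrier hom_mult monoid.m_closed flip: assms(4))
qed blast

lemma brauer_is_iso_DirProdI:
  assumes "monoid G" "group H1" "group H2"
    and \<Phi>: "\<Phi>1 \<in> hom (brauer G q) H1" "\<Phi>2 \<in> hom (brauer G q) H2"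
    and \<Theta>: "\<Theta>1 \<in> hom H1 (brauer G q)" "\<Theta>2 \<in> hom H2 (brauer G q)"
    and "\<And>u. u \<in> carrier H1 \<Longrightarrow> \<Phi>1 (\<Theta>1 u) = u" "\<And>u. u \<in> carrier H1 \<Longrightarrow> \<Phi>2 (\<Theta>1 u) = \<one>\<^bsub>H2\<^esub>"
    and "\<And>v. v \<in> carrier H2 \<Longrightarrow> \<Phi>1 (\<Theta>2 v) = \<one>\<^bsub>H1\<^esub>" "\<And>v. v \<in> carrier H2 \<Longrightarrow> \<Phi>2 (\<Theta>2 v) = v"
    and "\<And>x. x \<in> qset G q \<Longrightarrow>
      \<Theta>1 (\<Phi>1 (brauer_class G q x)) \<otimes>\<^bsub>brauer G q\<^esub> \<Theta>2 (\<Phi>2 (brauer_class G q x)) = brauer_class G q x"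
  shows "brauer G q \<cong> H1 \<times>\<times> H2"
proof -
  let ?\<Phi> = "\<lambda>w. (\<Phi>1 w, \<Phi>2 w)" and ?\<Theta> = "\<lambda>(u, v). \<Theta>1 u \<otimes>\<^bsub>brauer G q\<^esub> \<Theta>2 v"
  have homs: "?\<Phi> \<in> hom (brauer G q) (H1 \<times>\<times> H2)" "?\<Theta> \<in> hom (H1 \<times>\<times> H2) (brauer G q)"
    using \<Phi> \<Theta> assms(1) by (simp_all add: hom_paired hom_DirProd_mult comm_group_brauer)
  show ?thesis
  proof (rule inverse_homs_imp_is_iso[OF homs])
    show "?\<Theta> (?\<Phi> w) = w" if "w \<in> carrier (brauer G q)" for w
      by (rule brauer_hom_comp_eq_id[OF assms(1) homs _ that]) (use assms(12) in simp)
    show "?\<Phi> (?\<Theta> y) = y" if "y \<in> carrier (H1 \<times>\<times> H2)" for y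
      using that assms(1-3,8-11) \<Phi> hom_in_carrier[OF \<Theta>(1)] hom_in_carrier[OF \<Theta>(2)]
      by (auto simp: hom_mult group.is_monoid monoid.l_one monoid.r_one)
  qed
qed

lemma quaternionic_structureD:
  assumes "quaternionic_structure G m q z"
  shows "group G" "m \<in> carrier G" "\<And>a. a \<in> carrier G \<Longrightarrow> a \<otimes>\<^bsub>G\<^esub> a = \<one>\<^bsub>G\<^esub>"
    and "\<And>a b. a \<in> carrier G \<Longrightarrow> b \<in> carrier G \<Longrightarrow> q a b = q b a"
  using assms by (auto simp: quaternionic_structure_def)

lemma quaternionic_structure_comm_group:
  assumes "quaternionic_structure G m q z"
  shows "comm_group G"
  by (rule group.comm_group_if_squares_one[OF quaternionic_structureD(1,3)[OF assms]])

lemma quaternionic_structure_q_one: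
  assumes "quaternionic_structure G m q z" "a \<in> carrier G"
  shows "q a \<one>\<^bsub>G\<^esub> = z"
proof -
  have "group G"
    using assms(1) by (simp add: quaternionic_structure_def)
  then have "q a \<one>\<^bsub>G\<^esub> = q a \<one>\<^bsub>G\<^esub> \<longleftrightarrow> q a (\<one>\<^bsub>G\<^esub> \<otimes>\<^bsub>G\<^esub> \<one>\<^bsub>G\<^esub>) = z"
    using assms monoid.one_closed[OF group.is_monoid] unfolding quaternionic_structure_def by blast
  then show ?thesis
    using \<open>group G\<close> by (simp add: group.is_monoid monoid.l_one)
qed

section \<open>Direct products\<close>

lemma qset_qprod_map: "qset (G \<times>\<times> G') (qprod_map q q') = qset G q \<times> qset G' q'"
  by (force simp: qset_def qprod_map_def)

lemma brauer_class_qprod_map_split: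
  assumes "monoid G" "monoid G'"
    and z: "\<And>a. a \<in> carrier G \<Longrightarrow> q a \<one>\<^bsub>G\<^esub> = z"
    and z': "\<And>a. a \<in> carrier G' \<Longrightarrow> q' a \<one>\<^bsub>G'\<^esub> = z'"
    and "a \<in> carrier G" "b \<in> carrier G" "a' \<in> carrier G'" "b' \<in> carrier G'"
  shows "brauer_class (G \<times>\<times> G') (qprod_map q q') (q a b, q' a' b')
       = brauer_class (G \<times>\<times> G') (qprod_map q q') (q a b, z')
           \<otimes>\<^bsub>brauer (G \<times>\<times> G') (qprod_map q q')\<^esub> brauer_class (G \<times>\<times> G') (qprod_map q q') (z, q' a' b')"
  using brauer_class_mult[OF DirProd_monoid[OF assms(1,2)],
      of "(a, a')" "(b, \<one>\<^bsub>G'\<^esub>)" "(\<one>\<^bsub>G\<^esub>, b')" "qprod_map q q'"] assms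
  by (simp add: qprod_map_def)

lemma brauer_DirProd_iso:
  assumes G: "monoid G" and G': "monoid G'"
    and z: "\<And>a. a \<in> carrier G \<Longrightarrow> q a \<one>\<^bsub>G\<^esub> = z"
    and z': "\<And>a. a \<in> carrier G' \<Longrightarrow> q' a \<one>\<^bsub>G'\<^esub> = z'"
  shows "brauer (G \<times>\<times> G') (qprod_map q q') \<cong> brauer G q \<times>\<times> brauer G' q'"
proof -
  let ?P = "G \<times>\<times> G'" and ?Q = "qprod_map q q'"
  let ?cl = "brauer_class ?P ?Q"
  have P: "monoid ?P"
    using G G' by (rule DirProd_monoid)
  have qP: "qset ?P ?Q = qset G q \<times> qset G' q'"
    by (rule qset_qprod_map)
  have zs: "z \<in> qset G q" "z' \<in> qset G' q'"
      "brauer_class G q z = \<one>\<^bsub>brauer G q\<^esub>" "brauer_class G' q' z' = \<one>\<^bsub>brauer G' q'\<^esub>"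
    using z z' q_in_qset brauer_class_q_one G G' monoid.one_closed by metis+
  obtain \<Phi>1 where \<Phi>1: "\<Phi>1 \<in> hom (brauer ?P ?Q) (brauer G q)"
      "\<And>x. x \<in> qset ?P ?Q \<Longrightarrow> \<Phi>1 (?cl x) = brauer_class G q (fst x)"
    by (rule brauer_map[OF P G, where \<phi> = fst and \<psi> = fst and q = ?Q and q' = q])
      (auto simp: hom_def qprod_map_def)
  obtain \<Phi>2 where \<Phi>2: "\<Phi>2 \<in> hom (brauer ?P ?Q) (brauer G' q')"
      "\<And>x. x \<in> qset ?P ?Q \<Longrightarrow> \<Phi>2 (?cl x) = brauer_class G' q' (snd x)"
    by (rule brauer_map[OF P G', where \<phi> = snd and \<psi> = snd and q = ?Q and q' = q'])
      (auto simp: hom_def qprod_map_def)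
  obtain \<Theta>1 where \<Theta>1: "\<Theta>1 \<in> hom (brauer G q) (brauer ?P ?Q)"
      "\<And>x. x \<in> qset G q \<Longrightarrow> \<Theta>1 (brauer_class G q x) = ?cl (x, z')"
    by (rule brauer_map[OF G P, where \<phi> = "\<lambda>a. (a, \<one>\<^bsub>G'\<^esub>)" and \<psi> = "\<lambda>x. (x, z')"
          and q = q and q' = ?Q])
      (use G' in \<open>auto simp: hom_def qprod_map_def z'\<close>)
  obtain \<Theta>2 where \<Theta>2: "\<Theta>2 \<in> hom (brauer G' q') (brauer ?P ?Q)"
      "\<And>x. x \<in> qset G' q' \<Longrightarrow> \<Theta>2 (brauer_class G' q' x) = ?cl (z, x)"
    by (rule brauer_map[OF G' P, where \<phi> = "\<lambda>a. (\<one>\<^bsub>G\<^esub>, a)" and \<psi> = "\<lambda>x. (z, x)"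
          and q = q' and q' = ?Q])
      (use G in \<open>auto simp: hom_def qprod_map_def z\<close>)
  show ?thesis
  proof (rule brauer_is_iso_DirProdI[OF P group_brauer[OF G] group_brauer[OF G']
        \<Phi>1(1) \<Phi>2(1) \<Theta>1(1) \<Theta>2(1)])
    show "\<Phi>1 (\<Theta>1 u) = u" if "u \<in> carrier (brauer G q)" for u
      by (rule brauer_hom_comp_eq_id[OF G \<Theta>1(1) \<Phi>1(1) _ that])
        (use \<Theta>1(2) \<Phi>1(2) qP zs in auto)
    show "\<Phi>2 (\<Theta>1 u) = \<one>\<^bsub>brauer G' q'\<^esub>" if "u \<in> carrier (brauer G q)" for u
      by (rule brauer_hom_comp_eq_one[OF G group_brauer[OF G'] \<Theta>1(1) \<Phi>2(1) _ that])
        (use \<Theta>1(2) \<Phi>2(2) qP zs in auto)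
    show "\<Phi>1 (\<Theta>2 v) = \<one>\<^bsub>brauer G q\<^esub>" if "v \<in> carrier (brauer G' q')" for v
      by (rule brauer_hom_comp_eq_one[OF G' group_brauer[OF G] \<Theta>2(1) \<Phi>1(1) _ that])
        (use \<Theta>2(2) \<Phi>1(2) qP zs in auto)
    show "\<Phi>2 (\<Theta>2 v) = v" if "v \<in> carrier (brauer G' q')" for v
      by (rule brauer_hom_comp_eq_id[OF G' \<Theta>2(1) \<Phi>2(1) _ that])
        (use \<Theta>2(2) \<Phi>2(2) qP zs in auto)
  next
    fix x assume x_in: "x \<in> qset ?P ?Q"
    then obtain a a' b b' where ab: "a \<in> carrier G" "b \<in> carrier G"
      and ab': "a' \<in> carrier G'" "b' \<in> carrier G'"
      and x: "x = (q a b, q' a' b')"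
      by (auto simp: qset_def qprod_map_def)
    have "\<Theta>1 (\<Phi>1 (?cl x)) = ?cl (q a b, z')" "\<Theta>2 (\<Phi>2 (?cl x)) = ?cl (z, q' a' b')"
      using x_in ab ab' by (simp_all add: \<Phi>1(2) \<Phi>2(2) \<Theta>1(2) \<Theta>2(2) x q_in_qset)
    then show "\<Theta>1 (\<Phi>1 (?cl x)) \<otimes>\<^bsub>brauer ?P ?Q\<^esub> \<Theta>2 (\<Phi>2 (?cl x)) = ?cl x"
      using brauer_class_qprod_map_split[where q = q and q' = q', OF G G' z z' ab ab']
      by (simp add: x)
  qed
qed

section \<open>Group extensions\<close>

lemma carrier_C2 [simp]: "carrier C2 = UNIV"
  and mult_C2 [simp]: "x \<otimes>\<^bsub>C2\<^esub> y = (x \<noteq> y)"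
  and one_C2 [simp]: "\<one>\<^bsub>C2\<^esub> = False"
  by (simp_all add: C2_def)

lemma group_C2: "group C2"
  by (rule groupI) auto

lemma monoid_DirProd_C2: "monoid G \<Longrightarrow> monoid (G \<times>\<times> C2)"
  by (simp add: DirProd_monoid group_C2 group.is_monoid)

lemma qext_map_apply:
  "qext_map G m q (a, al) (b, be) = (q a b,
     (if al \<and> be then m else \<one>\<^bsub>G\<^esub>) \<otimes>\<^bsub>G\<^esub>
       ((if be then a else \<one>\<^bsub>G\<^esub>) \<otimes>\<^bsub>G\<^esub> (if al then b else \<one>\<^bsub>G\<^esub>)))"
  by (simp add: qext_map_def)

lemma qext_map_commute:
  assumes "comm_group G" "\<And>a b. a \<in> carrier G \<Longrightarrow> b \<in> carrier G \<Longrightarrow> q a b = q b a"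
    and "A \<in> carrier (G \<times>\<times> C2)" "B \<in> carrier (G \<times>\<times> C2)"
  shows "qext_map G m q A B = qext_map G m q B A"
proof -
  interpret comm_group G by fact
  show ?thesis
    using assms(2-4) by (cases A; cases B) (auto simp: qext_map_apply m_comm conj_commute)
qed

lemma qext_map_snd_mult:
  assumes "comm_group G" "\<And>x. x \<in> carrier G \<Longrightarrow> x \<otimes>\<^bsub>G\<^esub> x = \<one>\<^bsub>G\<^esub>" "m \<in> carrier G"
    and "A \<in> carrier (G \<times>\<times> C2)" "B \<in> carrier (G \<times>\<times> C2)" "C \<in> carrier (G \<times>\<times> C2)"
  shows "snd (qext_map G m q A B) \<otimes>\<^bsub>G\<^esub> snd (qext_map G m q A C)
       = snd (qext_map G m q A (B \<otimes>\<^bsub>G \<times>\<times> C2\<^esub> C))"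
proof -
  interpret comm_group G by fact
  have cancel: "x \<otimes>\<^bsub>G\<^esub> (x \<otimes>\<^bsub>G\<^esub> y) = y" if "x \<in> carrier G" "y \<in> carrier G" for x y
    using that assms(2) by (simp flip: m_assoc)
  obtain a al b be c ga where "A = (a, al)" "B = (b, be)" "C = (c, ga)"
    by (metis prod.exhaust)
  then show ?thesis
    using assms(2-6) by (cases al; cases be; cases ga) (simp_all add: qext_map_apply m_ac cancel)
qed

lemma qset_qext_mapI:
  assumes "quaternionic_structure G m q z"
  shows "x \<in> qset G q \<Longrightarrow> (x, \<one>\<^bsub>G\<^esub>) \<in> qset (G \<times>\<times> C2) (qext_map G m q)"
    and "g \<in> carrier G \<Longrightarrow> (z, g) \<in> qset (G \<times>\<times> C2) (qext_map G m q)"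
proof -
  interpret group G
    by (rule quaternionic_structureD(1)[OF assms])
  show "(x, \<one>\<^bsub>G\<^esub>) \<in> qset (G \<times>\<times> C2) (qext_map G m q)" if x: "x \<in> qset G q"
  proof -
    obtain a b where "a \<in> carrier G" "b \<in> carrier G" "x = q a b"
      using x by (auto simp: qset_def)
    then show ?thesis
      using q_in_qset[of "(a, False)" "G \<times>\<times> C2" "(b, False)" "qext_map G m q"]
      by (simp add: qext_map_apply)
  qed
  show "(z, g) \<in> qset (G \<times>\<times> C2) (qext_map G m q)" if "g \<in> carrier G"
    using q_in_qset[of "(g, False)" "G \<times>\<times> C2" "(\<one>\<^bsub>G\<^esub>, True)" "qext_map G m q"] that
    by (simp add: qext_map_apply quaternionic_structure_q_one[OF assms])
qed

lemma brauer_class_zero_hom: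
  assumes S: "quaternionic_structure G m q z"
  shows "(\<lambda>g. brauer_class (G \<times>\<times> C2) (qext_map G m q) (z, g))
           \<in> hom G (brauer (G \<times>\<times> C2) (qext_map G m q))"
proof (rule homI)
  interpret group G
    by (rule quaternionic_structureD(1)[OF S])
  have P: "monoid (G \<times>\<times> C2)"
    by (rule monoid_DirProd_C2[OF is_monoid])
  show "brauer_class (G \<times>\<times> C2) (qext_map G m q) (z, g)
      \<in> carrier (brauer (G \<times>\<times> C2) (qext_map G m q))"
    if "g \<in> carrier G" for g
    using that by (simp add: brauer_class_closed[OF P] qset_qext_mapI(2)[OF S])
  have "qext_map G m q (\<one>\<^bsub>G\<^esub>, True) (g, False) = (z, g)" if "g \<in> carrier G" for g
    using that quaternionic_structure_q_one[OF S] quaternionic_structureD(4)[OF S]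
    by (simp add: qext_map_apply)
  then show "brauer_class (G \<times>\<times> C2) (qext_map G m q) (z, g \<otimes>\<^bsub>G\<^esub> h)
      = brauer_class (G \<times>\<times> C2) (qext_map G m q) (z, g)
          \<otimes>\<^bsub>brauer (G \<times>\<times> C2) (qext_map G m q)\<^esub> brauer_class (G \<times>\<times> C2) (qext_map G m q) (z, h)"
    if "g \<in> carrier G" "h \<in> carrier G" for g h
    using brauer_class_mult[OF P, of "(\<one>\<^bsub>G\<^esub>, True)" "(g, False)" "(h, False)" "qext_map G m q"] that
    by simp
qed

text \<open>Expand the symmetric bilinear map (A, B) |-> [q_x A B] along (a, al) = (a, False) (1, al) and
  (b, be) = (b, False) (1, be); only the term at (a, False), (b, False) has a first coordinate
  other than the zero quaternion.\<close>

lemma brauer_class_qext_map_split: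
  assumes S: "quaternionic_structure G m q z" and "a \<in> carrier G" "b \<in> carrier G"
  shows "brauer_class (G \<times>\<times> C2) (qext_map G m q) (qext_map G m q (a, al) (b, be))
       = brauer_class (G \<times>\<times> C2) (qext_map G m q) (q a b, \<one>\<^bsub>G\<^esub>)
           \<otimes>\<^bsub>brauer (G \<times>\<times> C2) (qext_map G m q)\<^esub>
         brauer_class (G \<times>\<times> C2) (qext_map G m q) (z, snd (qext_map G m q (a, al) (b, be)))"
proof -
  let ?P = "G \<times>\<times> C2" and ?Q = "qext_map G m q"
  let ?cl = "brauer_class ?P ?Q" and ?B = "brauer ?P ?Q"
  let ?e = "\<lambda>g. ?cl (z, g)"
  interpret comm_group G
    by (rule quaternionic_structure_comm_group[OF S])
  have P: "monoid ?P"
    by (rule monoid_DirProd_C2[OF is_monoid])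
  interpret B: comm_group ?B
    by (rule comm_group_brauer[OF P])
  have m: "m \<in> carrier G" and q_sym: "\<And>x y. x \<in> carrier G \<Longrightarrow> y \<in> carrier G \<Longrightarrow> q x y = q y x"
    using quaternionic_structureD[OF S] by auto
  have q_one: "q x \<one>\<^bsub>G\<^esub> = z" "q \<one>\<^bsub>G\<^esub> x = z" if "x \<in> carrier G" for x
    using that quaternionic_structure_q_one[OF S] q_sym by auto
  note e = brauer_class_zero_hom[OF S]
  have \<beta>_sym: "?Q A B = ?Q B A" if "A \<in> carrier ?P" "B \<in> carrier ?P" for A B
    by (rule qext_map_commute[OF comm_group_axioms q_sym that])
  have \<beta>_right: "?cl (?Q A (b, be)) = ?cl (?Q A (b, False)) \<otimes>\<^bsub>?B\<^esub> ?cl (?Q A (\<one>\<^bsub>G\<^esub>, be))"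
    if "A \<in> carrier ?P" for A
    using brauer_class_mult[OF P that, of "(b, False)" "(\<one>\<^bsub>G\<^esub>, be)" ?Q] assms by simp
  have "?cl (?Q (a, al) (b, be)) = ?cl (?Q (a, False) (b, be)) \<otimes>\<^bsub>?B\<^esub> ?cl (?Q (\<one>\<^bsub>G\<^esub>, al) (b, be))"
    using brauer_class_mult_left[OF P \<beta>_sym,
        where a = "(a, False)" and b = "(\<one>\<^bsub>G\<^esub>, al)" and c = "(b, be)"]
      assms by simp
  also have "\<dots> = (?cl (?Q (a, False) (b, False)) \<otimes>\<^bsub>?B\<^esub> ?cl (?Q (a, False) (\<one>\<^bsub>G\<^esub>, be)))
      \<otimes>\<^bsub>?B\<^esub> (?cl (?Q (\<one>\<^bsub>G\<^esub>, al) (b, False)) \<otimes>\<^bsub>?B\<^esub> ?cl (?Q (\<one>\<^bsub>G\<^esub>, al) (\<one>\<^bsub>G\<^esub>, be)))"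
    using assms by (simp add: \<beta>_right)
  also have "\<dots> = (?cl (q a b, \<one>\<^bsub>G\<^esub>) \<otimes>\<^bsub>?B\<^esub> ?e (if be then a else \<one>\<^bsub>G\<^esub>))
      \<otimes>\<^bsub>?B\<^esub> (?e (if al then b else \<one>\<^bsub>G\<^esub>) \<otimes>\<^bsub>?B\<^esub> ?e (if al \<and> be then m else \<one>\<^bsub>G\<^esub>))"
    using assms m by (simp add: qext_map_apply q_one)
  also have "\<dots> = ?cl (q a b, \<one>\<^bsub>G\<^esub>) \<otimes>\<^bsub>?B\<^esub>
      ?e ((if be then a else \<one>\<^bsub>G\<^esub>) \<otimes>\<^bsub>G\<^esub> ((if al then b else \<one>\<^bsub>G\<^esub>) \<otimes>\<^bsub>G\<^esub> (if al \<and> be then m else \<one>\<^bsub>G\<^esub>)))"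
    using assms m brauer_class_closed[OF P qset_qext_mapI(1)[OF S q_in_qset]] hom_in_carrier[OF e]
    by (simp add: B.m_assoc flip: hom_mult[OF e])
  also have "(if be then a else \<one>\<^bsub>G\<^esub>) \<otimes>\<^bsub>G\<^esub> ((if al then b else \<one>\<^bsub>G\<^esub>) \<otimes>\<^bsub>G\<^esub> (if al \<and> be then m else \<one>\<^bsub>G\<^esub>))
      = snd (?Q (a, al) (b, be))"
    using assms m by (simp add: qext_map_apply m_ac)
  finally show ?thesis .
qed

lemma brauer_qext_snd_hom:
  assumes S: "quaternionic_structure G m q z"
  obtains h where "h \<in> hom (brauer (G \<times>\<times> C2) (qext_map G m q)) G"
    "\<And>x. x \<in> qset (G \<times>\<times> C2) (qext_map G m q) \<Longrightarrow>
       h (brauer_class (G \<times>\<times> C2) (qext_map G m q) x) = snd x"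
proof -
  interpret comm_group G
    by (rule quaternionic_structure_comm_group[OF S])
  have m: "m \<in> carrier G"
    by (rule quaternionic_structureD(2)[OF S])
  show thesis
  proof (rule brauer_universal[OF monoid_DirProd_C2[OF is_monoid] comm_group_axioms, where f = snd])
    show "snd ` qset (G \<times>\<times> C2) (qext_map G m q) \<subseteq> carrier G"
      using m by (auto simp: qset_def qext_map_apply)
  qed (use qext_map_snd_mult[OF comm_group_axioms quaternionic_structureD(3)[OF S] m] that
      in blast)+
qed

lemma brauer_qext_iso:
  assumes S: "quaternionic_structure G m q z"
  shows "brauer (G \<times>\<times> C2) (qext_map G m q) \<cong> brauer G q \<times>\<times> G"
proof -
  let ?P = "G \<times>\<times> C2" and ?Q = "qext_map G m q"
  let ?cl = "brauer_class ?P ?Q"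
  interpret group G
    by (rule quaternionic_structureD(1)[OF S])
  have P: "monoid ?P"
    by (rule monoid_DirProd_C2[OF is_monoid])
  have z_one: "brauer_class G q z = \<one>\<^bsub>brauer G q\<^esub>"
    using brauer_class_q_one[OF is_monoid one_closed, of q] quaternionic_structure_q_one[OF S]
    by simp
  obtain \<Phi>1 where \<Phi>1: "\<Phi>1 \<in> hom (brauer ?P ?Q) (brauer G q)"
      "\<And>x. x \<in> qset ?P ?Q \<Longrightarrow> \<Phi>1 (?cl x) = brauer_class G q (fst x)"
    by (rule brauer_map[OF P is_monoid, where \<phi> = fst and \<psi> = fst and q = ?Q and q' = q])
      (auto simp: hom_def qext_map_apply)
  obtain \<Phi>2 where \<Phi>2: "\<Phi>2 \<in> hom (brauer ?P ?Q) G" "\<And>x. x \<in> qset ?P ?Q \<Longrightarrow> \<Phi>2 (?cl x) = snd x"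
    using brauer_qext_snd_hom[OF S] by blast
  obtain \<Theta>1 where \<Theta>1: "\<Theta>1 \<in> hom (brauer G q) (brauer ?P ?Q)"
      "\<And>x. x \<in> qset G q \<Longrightarrow> \<Theta>1 (brauer_class G q x) = ?cl (x, \<one>\<^bsub>G\<^esub>)"
    by (rule brauer_map[OF is_monoid P, where \<phi> = "\<lambda>a. (a, False)" and \<psi> = "\<lambda>x. (x, \<one>\<^bsub>G\<^esub>)"
          and q = q and q' = ?Q])
      (auto simp: hom_def qext_map_apply)
  show ?thesis
  proof (rule brauer_is_iso_DirProdI[OF P group_brauer[OF is_monoid] is_group \<Phi>1(1) \<Phi>2(1) \<Theta>1(1)
        brauer_class_zero_hom[OF S]])
    show "\<Phi>1 (\<Theta>1 u) = u" if "u \<in> carrier (brauer G q)" for u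
      by (rule brauer_hom_comp_eq_id[OF is_monoid \<Theta>1(1) \<Phi>1(1) _ that])
        (simp add: \<Theta>1(2) \<Phi>1(2) qset_qext_mapI[OF S])
    show "\<Phi>2 (\<Theta>1 u) = \<one>\<^bsub>G\<^esub>" if "u \<in> carrier (brauer G q)" for u
      by (rule brauer_hom_comp_eq_one[OF is_monoid is_group \<Theta>1(1) \<Phi>2(1) _ that])
        (simp add: \<Theta>1(2) \<Phi>2(2) qset_qext_mapI[OF S])
    show "\<Phi>1 (?cl (z, g)) = \<one>\<^bsub>brauer G q\<^esub>" "\<Phi>2 (?cl (z, g)) = g" if "g \<in> carrier G" for g
      using that by (simp_all add: \<Phi>1(2) \<Phi>2(2) qset_qext_mapI[OF S] z_one)
  next
    fix x assume x_in: "x \<in> qset ?P ?Q"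
    then obtain a al b be where ab: "a \<in> carrier G" "b \<in> carrier G" and x: "x = ?Q (a, al) (b, be)"
      by (auto simp: qset_def)
    have "\<Theta>1 (\<Phi>1 (?cl x)) = ?cl (q a b, \<one>\<^bsub>G\<^esub>)"
      using x_in ab by (simp add: \<Phi>1(2) \<Theta>1(2) x qext_map_apply q_in_qset)
    moreover have "\<Phi>2 (?cl x) = snd x"
      using x_in by (rule \<Phi>2(2))
    ultimately show "\<Theta>1 (\<Phi>1 (?cl x)) \<otimes>\<^bsub>brauer ?P ?Q\<^esub> ?cl (z, \<Phi>2 (?cl x)) = ?cl x"
      using brauer_class_qext_map_split[OF S ab, of al be] by (simp add: x)
  qed
qed

theorem proposition4:
  fixes G :: "('a, 'm) monoid_scheme" and m :: 'a and q :: "'a \<Rightarrow> 'a \<Rightarrow> 'q" and z :: 'q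
    and G' :: "('b, 'n) monoid_scheme" and m' :: 'b and q' :: "'b \<Rightarrow> 'b \<Rightarrow> 'r" and z' :: 'r
  assumes "quaternionic_structure G m q z"
      and "quaternionic_structure G' m' q' z'"
  shows "brauer (G \<times>\<times> G') (qprod_map q q') \<cong> brauer G q \<times>\<times> brauer G' q'
       \<and> brauer (G \<times>\<times> C2) (qext_map G m q) \<cong> brauer G q \<times>\<times> G"
proof -
  have "monoid G" "monoid G'"
    using assms by (simp_all add: quaternionic_structureD(1) group.is_monoid)
  then have "brauer (G \<times>\<times> G') (qprod_map q q') \<cong> brauer G q \<times>\<times> brauer G' q'"
    by (rule brauer_DirProd_iso) (simp_all add: quaternionic_structure_q_one[OF assms(1)]
        quaternionic_structure_q_one[OF assms(2)])
  moreover have "brauer (G \<times>\<times> C2) (qext_map G m q) \<cong> brauer G q \<times>\<times> G"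
    by (rule brauer_qext_iso[OF assms(1)])
  ultimately show ?thesis ..
qed

end
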